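(* For every $n\ge 1$, if $\pi$ is uniformly random in $S_n$, then $$\mathrm{Cov}(\mathrm{inv}(\pi),\mathrm{maj}(\pi))=\frac{n(n-1)}{8}.$$ In particular, the correlation coefficient of $\mathrm{inv}$ and $\mathrm{maj}$ on $S_n$ equals $\frac{9(n-1)}{2n^2+3n-5}=\frac{9}{2n+5}$ for $n\ge 2$, which tends to $0$ as $n\to\infty$.
   Context: For a permutation $\pi=\pi_1\cdots\pi_n$ of $\{1,\dots,n\}$: $\mathrm{inv}(\pi)$ is the number of pairs $1\le i<j\le n$ with $\pi_i>\pi_j$, and $\mathrm{maj}(\pi)$ is the sum of all positions $i\in\{1,\dots,n-1\}$ with $\pi_i>\pi_{i+1}$. Both statistics have variance $(2n^3+3n^2-5n)/72$ under the uniform distribution on $S_n$. *)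

theory Defs
  imports "HOL-Probability.Probability" "HOL-Combinatorics.Permutations"
begin

definition perms :: "nat \<Rightarrow> (nat \<Rightarrow> nat) set" where
  "perms n = {p. p permutes {1..n}}"

definition unif_perm :: "nat \<Rightarrow> (nat \<Rightarrow> nat) pmf" where
  "unif_perm n = pmf_of_set (perms n)"

definition inv_stat :: "nat \<Rightarrow> (nat \<Rightarrow> nat) \<Rightarrow> nat" where
  "inv_stat n p = card {(i, j). 1 \<le> i \<and> i < j \<and> j \<le> n \<and> p i > p j}"

definition maj_stat :: "nat \<Rightarrow> (nat \<Rightarrow> nat) \<Rightarrow> nat" where
  "maj_stat n p = (\<Sum>i \<in> {i \<in> {1..<n}. p i > p (Suc i)}. i)"

definition covariance :: "'a pmf \<Rightarrow> ('a \<Rightarrow> real) \<Rightarrow> ('a \<Rightarrow> real) \<Rightarrow> real" where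
  "covariance M X Y =
     measure_pmf.expectation M (\<lambda>x. (X x - measure_pmf.expectation M X) *
                                      (Y x - measure_pmf.expectation M Y))"

definition correlation :: "'a pmf \<Rightarrow> ('a \<Rightarrow> real) \<Rightarrow> ('a \<Rightarrow> real) \<Rightarrow> real" where
  "correlation M X Y =
     covariance M X Y / sqrt (measure_pmf.variance M X * measure_pmf.variance M Y)"

end

theory Submission
  imports Defs "HOL-Real_Asymp.Real_Asymp"
begin

(* Every permutation q of {1..n+1} arises uniquely from a permutation p of {1..n} and a
   value v in {1..n+1} by raising the values >= v of p by one and appending v
   (extend_perm).  Under this bijection inv grows by n + 1 - v, and maj grows by n
   exactly when v <= p n (a new descent at position n).  Hence the average of any
   statistic over S_(n+1) is the S_n-average of its v-average, and for statistics that
   are polynomial in (inv, maj, v) the v-average is an explicit polynomial in inv, maj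
   and the last value p n (mean_Suc_insertion).

   This yields recurrences for the averages of inv, maj, inv^2, maj^2, inv*maj and of
   inv*(p n), maj*(p n); together with the uniform distribution of p n they are solved
   by induction on n.  Covariance, variances (both n(n-1)(2n+5)/72) and the correlation
   9/(2n+5) follow by algebra, and its limit 0 by asymptotics. *)

section \<open>Inserting a new last value into a permutation\<close>

definition extend_perm :: "nat \<Rightarrow> (nat \<Rightarrow> nat) \<Rightarrow> nat \<Rightarrow> nat \<Rightarrow> nat" where
  "extend_perm n p v i =
     (if i = Suc n then v
      else if i \<in> {1..n} then (if v \<le> p i then Suc (p i) else p i)
      else i)"

lemma extend_perm_last: "extend_perm n p v (Suc n) = v"
  by (simp add: extend_perm_def)

lemma extend_perm_inner:
  "i \<in> {1..n} \<Longrightarrow> extend_perm n p v i = (if v \<le> p i then Suc (p i) else p i)"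
  by (simp add: extend_perm_def)

lemma perms_value_range:
  assumes "p \<in> perms n" and "i \<in> {1..n}"
  shows "p i \<in> {1..n}"
  using assms permutes_in_image by (fastforce simp: perms_def)

lemma perms_last_le:
  assumes "p \<in> perms n"
  shows "p n \<le> n"
proof (cases "n = 0")
  case True
  then show ?thesis using assms permutes_not_in[of p "{1..n}" 0] by (simp add: perms_def)
next
  case False
  then show ?thesis using perms_value_range[OF assms, of n] by simp
qed

lemma extend_perm_permutes:
  assumes p: "p \<in> perms n" and v: "v \<in> {1..Suc n}"
  shows "extend_perm n p v \<in> perms (Suc n)"
proof -
  have inj_p: "inj p" using p by (simp add: perms_def permutes_inj)
  have inj: "inj_on (extend_perm n p v) {1..Suc n}"
  proof (rule inj_onI)
    fix x y assume x: "x \<in> {1..Suc n}" and y: "y \<in> {1..Suc n}"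
      and eq: "extend_perm n p v x = extend_perm n p v y"
    consider "x = Suc n" | "y = Suc n" | "x \<in> {1..n}" "y \<in> {1..n}" using x y by fastforce
    then show "x = y"
    proof cases
      case 1
      then show ?thesis using eq y perms_value_range[OF p, of y]
        by (auto simp: extend_perm_def split: if_splits)
    next
      case 2
      then show ?thesis using eq x perms_value_range[OF p, of x]
        by (auto simp: extend_perm_def split: if_splits)
    next
      case 3
      then have "p x = p y" using eq by (auto simp: extend_perm_inner split: if_splits)
      then show ?thesis using inj_p by (auto dest: injD)
    qed
  qed
  have into: "extend_perm n p v ` {1..Suc n} \<subseteq> {1..Suc n}"
    using v perms_value_range[OF p] by (auto simp: extend_perm_def)
  have "extend_perm n p v ` {1..Suc n} = {1..Suc n}"
    by (rule endo_inj_surj[OF _ into inj]) simp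
  then have "bij_betw (extend_perm n p v) {1..Suc n} {1..Suc n}"
    using inj by (simp add: bij_betw_def)
  moreover have "extend_perm n p v x = x" if "x \<notin> {1..Suc n}" for x
    using that by (auto simp: extend_perm_def)
  ultimately show ?thesis unfolding perms_def by (blast intro: bij_imp_permutes)
qed

lemma extend_perm_inj: "inj_on (\<lambda>(p, v). extend_perm n p v) (perms n \<times> {1..Suc n})"
proof (rule inj_onI, clarify)
  fix p v p' v' assume p: "p \<in> perms n" and p': "p' \<in> perms n"
    and eq: "extend_perm n p v = extend_perm n p' v'"
  have v: "v = v'" using fun_cong[OF eq, of "Suc n"] by (simp add: extend_perm_last)
  have "p i = p' i" for i
  proof (cases "i \<in> {1..n}")
    case True
    then show ?thesis using fun_cong[OF eq, of i] v by (auto simp: extend_perm_inner split: if_splits)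
  next
    case False
    then show ?thesis using p p' by (simp add: perms_def permutes_not_in)
  qed
  then show "p = p' \<and> v = v'" using v by auto
qed

lemma card_perms: "card (perms n) = fact n"
  unfolding perms_def by (rule card_permutations) auto

lemma finite_perms: "finite (perms n)"
  unfolding perms_def by (rule finite_permutations) auto

lemma extend_perm_bij:
  "bij_betw (\<lambda>(p, v). extend_perm n p v) (perms n \<times> {1..Suc n}) (perms (Suc n))"
proof -
  have "(\<lambda>(p, v). extend_perm n p v) ` (perms n \<times> {1..Suc n}) = perms (Suc n)"
  proof (rule card_subset_eq[OF finite_perms])
    show "(\<lambda>(p, v). extend_perm n p v) ` (perms n \<times> {1..Suc n}) \<subseteq> perms (Suc n)"
      using extend_perm_permutes by auto
    show "card ((\<lambda>(p, v). extend_perm n p v) ` (perms n \<times> {1..Suc n})) = card (perms (Suc n))"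
      by (simp add: card_image[OF extend_perm_inj] card_cartesian_product card_perms
          del: One_nat_def)
  qed
  then show ?thesis using extend_perm_inj by (simp add: bij_betw_def)
qed

section \<open>How inversions and major index change under insertion\<close>

lemma card_values_ge:
  assumes p: "p \<in> perms n" and v: "v \<in> {1..Suc n}"
  shows "card {i \<in> {1..n}. v \<le> p i} = Suc n - v"
proof -
  have pp: "p permutes {1..n}" using p by (simp add: perms_def)
  have "p ` {i \<in> {1..n}. v \<le> p i} = {v..n}"
  proof
    show "p ` {i \<in> {1..n}. v \<le> p i} \<subseteq> {v..n}"
      using perms_value_range[OF p] by fastforce
    show "{v..n} \<subseteq> p ` {i \<in> {1..n}. v \<le> p i}"
    proof
      fix y assume y: "y \<in> {v..n}"
      then have "y \<in> {1..n}" using v by simp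
      then have "y \<in> p ` {1..n}" by (simp only: permutes_image[OF pp])
      then show "y \<in> p ` {i \<in> {1..n}. v \<le> p i}" using y by auto
    qed
  qed
  then have "card {v..n} = card {i \<in> {1..n}. v \<le> p i}"
    by (metis card_image permutes_inj_on[OF pp])
  then show ?thesis by simp
qed

text \<open>The new last entry \<open>v\<close> forms an inversion with exactly the \<open>n + 1 - v\<close> earlier
  entries that exceed it; the relative order of the earlier entries is unchanged.\<close>

lemma inv_stat_extend:
  assumes p: "p \<in> perms n" and v: "v \<in> {1..Suc n}"
  shows "inv_stat (Suc n) (extend_perm n p v) = inv_stat n p + (Suc n - v)"
proof -
  define old where "old = {(i, j). 1 \<le> i \<and> i < j \<and> j \<le> n \<and> p i > p j}"
  define big where "big = {i \<in> {1..n}. v \<le> p i}"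
  have split: "{(i, j). 1 \<le> i \<and> i < j \<and> j \<le> Suc n \<and> extend_perm n p v i > extend_perm n p v j}
      = old \<union> (\<lambda>i. (i, Suc n)) ` big"
  proof (rule set_eqI, clarify)
    fix i j
    show "(i, j) \<in> {(i, j). 1 \<le> i \<and> i < j \<and> j \<le> Suc n \<and> extend_perm n p v i > extend_perm n p v j}
      \<longleftrightarrow> (i, j) \<in> old \<union> (\<lambda>i. (i, Suc n)) ` big"
    proof (cases "1 \<le> i \<and> i < j \<and> j \<le> Suc n")
      case True
      then have i: "extend_perm n p v i = (if v \<le> p i then Suc (p i) else p i)"
        by (simp add: extend_perm_inner)
      show ?thesis
      proof (cases "j = Suc n")
        case True
        then show ?thesis using i \<open>1 \<le> i \<and> i < j \<and> j \<le> Suc n\<close>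
          by (auto simp: old_def big_def extend_perm_last)
      next
        case False
        then have "extend_perm n p v j = (if v \<le> p j then Suc (p j) else p j)"
          using True by (simp add: extend_perm_inner)
        then show ?thesis using i True False by (auto simp: old_def big_def)
      qed
    next
      case False
      then show ?thesis by (auto simp: old_def big_def)
    qed
  qed
  have "finite old"
    by (rule finite_subset[of _ "{1..n} \<times> {1..n}"]) (auto simp: old_def)
  then have "card (old \<union> (\<lambda>i. (i, Suc n)) ` big) = card old + card big"
    by (subst card_Un_disjoint) (auto simp: old_def big_def card_image inj_on_def)
  then show ?thesis
    unfolding inv_stat_def split using card_values_ge[OF p v] by (simp add: old_def big_def)
qed

text \<open>The only possible new descent is at position \<open>n\<close>, and it occurs iff \<open>v \<le> p n\<close>.\<close>

lemma maj_stat_extend: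
  assumes p: "p \<in> perms n" and v: "v \<in> {1..Suc n}"
  shows "maj_stat (Suc n) (extend_perm n p v) = maj_stat n p + (if v \<le> p n then n else 0)"
proof -
  define old where "old = {i \<in> {1..<n}. p i > p (Suc i)}"
  have split: "{i \<in> {1..<Suc n}. extend_perm n p v i > extend_perm n p v (Suc i)}
      = old \<union> (if v \<le> p n then {n} else {})"
  proof (rule set_eqI)
    fix i
    consider "1 \<le> i \<and> i < n" | "i = n" "1 \<le> n" | "\<not> (1 \<le> i \<and> i \<le> n)" by linarith
    then show "i \<in> {i \<in> {1..<Suc n}. extend_perm n p v i > extend_perm n p v (Suc i)}
      \<longleftrightarrow> i \<in> old \<union> (if v \<le> p n then {n} else {})"
    proof cases
      case 1
      then show ?thesis by (auto simp: old_def extend_perm_inner)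
    next
      case 2
      then show ?thesis by (auto simp: old_def extend_perm_inner extend_perm_last)
    next
      case 3
      moreover have "v \<le> p n \<Longrightarrow> 1 \<le> n" using v perms_last_le[OF p] by simp
      ultimately show ?thesis by (auto simp: old_def)
    qed
  qed
  have "finite old" by (simp add: old_def)
  then show ?thesis
    unfolding maj_stat_def split by (auto simp: old_def)
qed

definition mean :: "nat \<Rightarrow> ((nat \<Rightarrow> nat) \<Rightarrow> real) \<Rightarrow> real" where
  "mean n f = (\<Sum>p\<in>perms n. f p) / fact n"

lemma expectation_unif_perm: "measure_pmf.expectation (unif_perm n) f = mean n f"
proof -
  have "perms n \<noteq> {}" by (auto simp: perms_def intro: permutes_id)
  then show ?thesis
    by (simp add: unif_perm_def integral_pmf_of_set finite_perms card_perms mean_def)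
qed

lemma mean_const [simp]: "mean n (\<lambda>p. c) = c"
  by (simp add: mean_def card_perms)

lemma mean_add [simp]: "mean n (\<lambda>p. f p + g p) = mean n f + mean n g"
  by (simp add: mean_def sum.distrib add_divide_distrib)

lemma mean_diff [simp]: "mean n (\<lambda>p. f p - g p) = mean n f - mean n g"
  by (simp add: mean_def sum_subtractf diff_divide_distrib)

lemma mean_mult_left [simp]: "mean n (\<lambda>p. c * f p) = c * mean n f"
  by (simp add: mean_def sum_distrib_left)

lemma mean_mult_right [simp]: "mean n (\<lambda>p. f p * c) = mean n f * c"
  by (simp add: mean_def sum_distrib_right)

lemma mean_mult_inner [simp]: "mean n (\<lambda>p. f p * (c * g p)) = c * mean n (\<lambda>p. f p * g p)"
  by (simp add: mean_def sum_distrib_left mult.left_commute)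

lemma mean_divide [simp]: "mean n (\<lambda>p. f p / c) = mean n f / c"
  by (simp add: mean_def sum_divide_distrib mult.commute)

lemma mean_cong: "(\<And>p. p \<in> perms n \<Longrightarrow> f p = g p) \<Longrightarrow> mean n f = mean n g"
  by (simp add: mean_def)

lemma perms_0: "perms 0 = {id}"
  by (auto simp: perms_def)

lemma mean_0: "mean 0 f = f id"
  by (simp add: mean_def perms_0)

lemma covariance_unif_perm:
  "covariance (unif_perm n) f g = mean n (\<lambda>p. f p * g p) - mean n f * mean n g"
  by (simp add: covariance_def expectation_unif_perm algebra_simps)

lemma variance_unif_perm:
  "measure_pmf.variance (unif_perm n) f = mean n (\<lambda>p. f p ^ 2) - mean n f ^ 2"
  by (simp add: expectation_unif_perm power2_eq_square algebra_simps)

lemma mean_Suc: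
  "mean (Suc n) f = mean n (\<lambda>p. (\<Sum>v=1..Suc n. f (extend_perm n p v)) / (real n + 1))"
proof -
  have "(\<Sum>q\<in>perms (Suc n). f q) = (\<Sum>(p, v)\<in>perms n \<times> {1..Suc n}. f (extend_perm n p v))"
    using sum.reindex_bij_betw[OF extend_perm_bij, of f] by (simp add: case_prod_beta')
  also have "\<dots> = (\<Sum>p\<in>perms n. \<Sum>v=1..Suc n. f (extend_perm n p v))"
    by (simp only: sum.cartesian_product split_def)
  finally have "(\<Sum>q\<in>perms (Suc n). f q) = (\<Sum>p\<in>perms n. \<Sum>v=1..Suc n. f (extend_perm n p v))" .
  moreover have "(fact (Suc n) :: real) = (real n + 1) * fact n" by simp
  ultimately show ?thesis
    unfolding mean_divide mean_def divide_divide_eq_left by (simp only: mult.commute)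
qed

lemma mean_last_value:
  "mean (Suc n) (\<lambda>q. g (q (Suc n))) = (\<Sum>v=1..Suc n. g v) / (real n + 1)"
  by (simp add: mean_Suc extend_perm_last)

section \<open>Moment recurrences\<close>

lemma sum_upto_id: "(\<Sum>v=1..m. real v) = real m * (real m + 1) / 2"
  by (induction m) (simp_all add: field_simps)

lemma sum_upto_square: "(\<Sum>v=1..m. real v ^ 2) = real m * (real m + 1) * (2 * real m + 1) / 6"
  by (induction m) (simp_all add: field_simps power2_eq_square)

lemma sum_upto_indicator:
  fixes g :: "nat \<Rightarrow> 'a::comm_monoid_add"
  assumes "w \<le> m"
  shows "(\<Sum>v=1..m. if v \<le> w then g v else 0) = (\<Sum>v=1..w. g v)"
proof -
  have "(\<Sum>v=1..m. if v \<le> w then g v else 0) = (\<Sum>v\<in>{1..m} \<inter> {v. v \<le> w}. g v)"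
    by (simp add: sum.inter_restrict)
  also have "{1..m} \<inter> {v. v \<le> w} = {1..w}" using assms by auto
  finally show ?thesis .
qed

text \<open>All statistics considered below change under insertion of the last value \<open>v\<close> by
  a quadratic polynomial in \<open>v\<close>, plus a linear one switched on when \<open>v \<le> p n\<close> (a new
  descent at position \<open>n\<close>).\<close>

lemma mean_Suc_insertion:
  assumes step: "\<And>p v. p \<in> perms n \<Longrightarrow> v \<in> {1..Suc n} \<Longrightarrow>
    f (extend_perm n p v) = base p + lin p * real v + quad p * real v ^ 2
                            + (if v \<le> p n then jump p + jump_lin p * real v else 0)"
  shows "mean (Suc n) f = mean n (\<lambda>p. base p + lin p * (real n + 2) / 2
           + quad p * (real n + 2) * (2 * real n + 3) / 6
           + (jump p * real (p n) + jump_lin p * real (p n) * (real (p n) + 1) / 2) / (real n + 1))"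
  unfolding mean_Suc
proof (rule mean_cong)
  fix p assume p: "p \<in> perms n"
  have "(\<Sum>v=1..Suc n. f (extend_perm n p v))
      = (\<Sum>v=1..Suc n. base p + lin p * real v + quad p * real v ^ 2)
        + (\<Sum>v=1..Suc n. if v \<le> p n then jump p + jump_lin p * real v else 0)"
    by (simp add: step[OF p] sum.distrib del: sum.cl_ivl_Suc)
  also have "(\<Sum>v=1..Suc n. if v \<le> p n then jump p + jump_lin p * real v else 0)
      = (\<Sum>v=1..p n. jump p + jump_lin p * real v)"
    using perms_last_le[OF p] by (intro sum_upto_indicator) simp
  finally have "(\<Sum>v=1..Suc n. f (extend_perm n p v))
      = base p * (real n + 1) + lin p * (real n + 1) * (real n + 2) / 2
        + quad p * (real n + 1) * (real n + 2) * (2 * real n + 3) / 6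
        + jump p * real (p n) + jump_lin p * real (p n) * (real (p n) + 1) / 2"
    by (simp only: sum.distrib sum_distrib_left[symmetric] sum_constant sum_upto_id sum_upto_square)
      (simp add: field_simps)
  then show "(\<Sum>v=1..Suc n. f (extend_perm n p v)) / (real n + 1)
      = base p + lin p * (real n + 2) / 2 + quad p * (real n + 2) * (2 * real n + 3) / 6
        + (jump p * real (p n) + jump_lin p * real (p n) * (real (p n) + 1) / 2) / (real n + 1)"
    by (simp add: field_simps del: sum.cl_ivl_Suc)
qed

abbreviation inv_real :: "nat \<Rightarrow> (nat \<Rightarrow> nat) \<Rightarrow> real" where
  "inv_real n p \<equiv> real (inv_stat n p)"

abbreviation maj_real :: "nat \<Rightarrow> (nat \<Rightarrow> nat) \<Rightarrow> real" where
  "maj_real n p \<equiv> real (maj_stat n p)"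

lemma mean_inv_Suc:
  "mean (Suc n) (inv_real (Suc n)) = mean n (inv_real n) + real n / 2"
  by (subst mean_Suc_insertion[where base = "\<lambda>p. inv_real n p + real n + 1" and lin = "\<lambda>_. -1"
        and quad = "\<lambda>_. 0" and jump = "\<lambda>_. 0" and jump_lin = "\<lambda>_. 0"])
    (simp_all add: inv_stat_extend algebra_simps add_divide_distrib diff_divide_distrib)

lemma mean_maj_Suc:
  "mean (Suc n) (maj_real (Suc n))
     = mean n (maj_real n) + real n * mean n (\<lambda>p. real (p n)) / (real n + 1)"
  by (subst mean_Suc_insertion[where base = "maj_real n" and lin = "\<lambda>_. 0"
        and quad = "\<lambda>_. 0" and jump = "\<lambda>_. real n" and jump_lin = "\<lambda>_. 0"])
    (simp_all add: maj_stat_extend algebra_simps add_divide_distrib diff_divide_distrib)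

lemma mean_inv_sq_Suc:
  "mean (Suc n) (\<lambda>q. inv_real (Suc n) q ^ 2)
     = mean n (\<lambda>p. inv_real n p ^ 2) + real n * mean n (inv_real n) + real n * (2 * real n + 1) / 6"
  by (subst mean_Suc_insertion[where base = "\<lambda>p. (inv_real n p + real n + 1) ^ 2"
        and lin = "\<lambda>p. -2 * (inv_real n p + real n + 1)"
        and quad = "\<lambda>_. 1" and jump = "\<lambda>_. 0" and jump_lin = "\<lambda>_. 0"])
    (simp_all add: inv_stat_extend algebra_simps power2_eq_square add_divide_distrib diff_divide_distrib)

lemma mean_maj_sq_Suc:
  "mean (Suc n) (\<lambda>q. maj_real (Suc n) q ^ 2)
     = mean n (\<lambda>p. maj_real n p ^ 2)
       + (2 * real n * mean n (\<lambda>p. maj_real n p * real (p n))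
          + real n ^ 2 * mean n (\<lambda>p. real (p n))) / (real n + 1)"
  by (subst mean_Suc_insertion[where base = "\<lambda>p. maj_real n p ^ 2" and lin = "\<lambda>_. 0"
        and quad = "\<lambda>_. 0" and jump = "\<lambda>p. 2 * real n * maj_real n p + real n ^ 2" and jump_lin = "\<lambda>_. 0"])
    (simp_all add: maj_stat_extend algebra_simps power2_eq_square add_divide_distrib diff_divide_distrib)

lemma mean_inv_maj_Suc:
  "mean (Suc n) (\<lambda>q. inv_real (Suc n) q * maj_real (Suc n) q)
     = mean n (\<lambda>p. inv_real n p * maj_real n p) + real n / 2 * mean n (maj_real n)
       + real n * (mean n (\<lambda>p. inv_real n p * real (p n)) + (real n + 1) * mean n (\<lambda>p. real (p n))
                   - mean n (\<lambda>p. real (p n) * (real (p n) + 1)) / 2) / (real n + 1)"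
  by (subst mean_Suc_insertion[where base = "\<lambda>p. (inv_real n p + real n + 1) * maj_real n p"
        and lin = "\<lambda>p. - maj_real n p" and quad = "\<lambda>_. 0"
        and jump = "\<lambda>p. real n * (inv_real n p + real n + 1)" and jump_lin = "\<lambda>_. - real n"])
    (simp_all add: inv_stat_extend maj_stat_extend algebra_simps add_divide_distrib diff_divide_distrib)

lemma mean_inv_last_Suc:
  "mean (Suc n) (\<lambda>q. inv_real (Suc n) q * real (q (Suc n)))
     = (real n + 2) / 2 * mean n (inv_real n) + real n * (real n + 2) / 6"
  by (subst mean_Suc_insertion[where base = "\<lambda>_. 0" and lin = "\<lambda>p. inv_real n p + real n + 1"
        and quad = "\<lambda>_. -1" and jump = "\<lambda>_. 0" and jump_lin = "\<lambda>_. 0"])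
    (simp_all add: inv_stat_extend extend_perm_last algebra_simps power2_eq_square add_divide_distrib diff_divide_distrib)

lemma mean_maj_last_Suc:
  "mean (Suc n) (\<lambda>q. maj_real (Suc n) q * real (q (Suc n)))
     = (real n + 2) / 2 * mean n (maj_real n)
       + real n * mean n (\<lambda>p. real (p n) * (real (p n) + 1)) / (2 * (real n + 1))"
  by (subst mean_Suc_insertion[where base = "\<lambda>_. 0" and lin = "maj_real n"
        and quad = "\<lambda>_. 0" and jump = "\<lambda>_. 0" and jump_lin = "\<lambda>_. real n"])
    (simp_all add: maj_stat_extend extend_perm_last algebra_simps add_divide_distrib diff_divide_distrib)

lemma inv_stat_0: "inv_stat 0 p = 0"
proof -
  have "{(i, j). 1 \<le> i \<and> i < j \<and> j \<le> (0::nat) \<and> p i > p j} = {}" by auto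
  then show ?thesis unfolding inv_stat_def by (metis card.empty)
qed

lemma maj_stat_0: "maj_stat 0 p = 0"
  by (simp add: maj_stat_def)

lemma mean_last:
  assumes "1 \<le> n"
  shows "mean n (\<lambda>p. real (p n)) = (real n + 1) / 2"
proof -
  obtain m where n: "n = Suc m" using assms by (cases n) auto
  have "mean (Suc m) (\<lambda>q. real (q (Suc m))) = (\<Sum>v=1..Suc m. real v) / (real m + 1)"
    by (rule mean_last_value)
  also have "\<dots> = (real (Suc m) + 1) / 2"
    unfolding sum_upto_id by (simp add: field_simps)
  finally show ?thesis unfolding n .
qed

lemma mean_last_rising:
  assumes "1 \<le> n"
  shows "mean n (\<lambda>p. real (p n) * (real (p n) + 1)) = (real n + 1) * (real n + 2) / 3"
proof -
  obtain m where n: "n = Suc m" using assms by (cases n) auto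
  have "mean (Suc m) (\<lambda>q. real (q (Suc m)) * (real (q (Suc m)) + 1))
      = (\<Sum>v=1..Suc m. real v * (real v + 1)) / (real m + 1)"
    by (rule mean_last_value)
  also have "(\<Sum>v=1..Suc m. real v * (real v + 1)) = (\<Sum>v=1..Suc m. real v ^ 2) + (\<Sum>v=1..Suc m. real v)"
    by (simp only: sum.distrib[symmetric] power2_eq_square distrib_left mult_1_right)
  also have "(\<dots>) / (real m + 1) = (real (Suc m) + 1) * (real (Suc m) + 2) / 3"
    unfolding sum_upto_id sum_upto_square by (simp add: field_simps)
  finally show ?thesis unfolding n .
qed

lemma mean_inv: "mean n (inv_real n) = real n * (real n - 1) / 4"
proof (induction n)
  case 0
  then show ?case by (simp add: mean_0 inv_stat_0)
next
  case (Suc n)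
  then show ?case unfolding mean_inv_Suc Suc.IH by (simp add: field_simps)
qed

lemma mean_inv_sq:
  "mean n (\<lambda>p. inv_real n p ^ 2) = real n * (real n - 1) * (9 * real n ^ 2 - 5 * real n + 10) / 144"
proof (induction n)
  case 0
  then show ?case by (simp add: mean_0 inv_stat_0)
next
  case (Suc n)
  then show ?case unfolding mean_inv_sq_Suc Suc.IH mean_inv
    by (simp add: field_simps power2_eq_square)
qed

lemma mean_maj: "mean n (maj_real n) = real n * (real n - 1) / 4"
proof (induction n)
  case 0
  then show ?case by (simp add: mean_0 maj_stat_0)
next
  case (Suc n)
  show ?case
  proof (cases "n = 0")
    case True
    then show ?thesis by (simp add: mean_maj_Suc mean_0 maj_stat_0)
  next
    case False
    then have n: "1 \<le> n" by simp
    show ?thesis unfolding mean_maj_Suc Suc.IH mean_last[OF n] by (simp add: field_simps)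
  qed
qed

lemma mean_inv_last:
  assumes "1 \<le> n"
  shows "mean n (\<lambda>p. inv_real n p * real (p n)) = (real n - 1) * (real n + 1) * (3 * real n - 2) / 24"
proof -
  obtain m where n: "n = Suc m" using assms by (cases n) auto
  show ?thesis unfolding n mean_inv_last_Suc mean_inv by (simp add: field_simps)
qed

lemma mean_maj_last:
  assumes "1 \<le> n"
  shows "mean n (\<lambda>p. maj_real n p * real (p n)) = (real n - 1) * (real n + 1) * (3 * real n - 2) / 24"
proof -
  obtain m where n: "n = Suc m" using assms by (cases n) auto
  show ?thesis
  proof (cases "m = 0")
    case True
    then show ?thesis unfolding n by (simp add: mean_maj_last_Suc mean_0 maj_stat_0)
  next
    case False
    then have m: "1 \<le> m" by simp
    show ?thesis unfolding n mean_maj_last_Suc mean_maj mean_last_rising[OF m]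
      by (simp add: field_simps)
  qed
qed

lemma mean_maj_sq:
  "mean n (\<lambda>p. maj_real n p ^ 2) = real n * (real n - 1) * (9 * real n ^ 2 - 5 * real n + 10) / 144"
proof (induction n)
  case 0
  then show ?case by (simp add: mean_0 maj_stat_0)
next
  case (Suc n)
  show ?case
  proof (cases "n = 0")
    case True
    then show ?thesis by (simp add: mean_maj_sq_Suc mean_0 maj_stat_0)
  next
    case False
    then have n: "1 \<le> n" by simp
    show ?thesis unfolding mean_maj_sq_Suc Suc.IH mean_last[OF n] mean_maj_last[OF n]
      by (simp add: field_simps power2_eq_square)
  qed
qed

lemma mean_inv_maj:
  "mean n (\<lambda>p. inv_real n p * maj_real n p) = real n * (real n - 1) * (real n ^ 2 - real n + 2) / 16"
proof (induction n)
  case 0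
  then show ?case by (simp add: mean_0 maj_stat_0)
next
  case (Suc n)
  show ?case
  proof (cases "n = 0")
    case True
    then show ?thesis by (simp add: mean_inv_maj_Suc mean_0 inv_stat_0 maj_stat_0)
  next
    case False
    then have n: "1 \<le> n" by simp
    show ?thesis
      unfolding mean_inv_maj_Suc Suc.IH mean_maj mean_inv_last[OF n] mean_last[OF n]
        mean_last_rising[OF n]
      by (simp add: field_simps power2_eq_square)
  qed
qed

lemma covariance_inv_maj:
  "covariance (unif_perm n) (inv_real n) (maj_real n) = real n * (real n - 1) / 8"
  unfolding covariance_unif_perm mean_inv_maj mean_inv mean_maj
  by (simp add: field_simps power2_eq_square)

lemma variance_inv:
  "measure_pmf.variance (unif_perm n) (inv_real n) = real n * (real n - 1) * (2 * real n + 5) / 72"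
  unfolding variance_unif_perm mean_inv_sq mean_inv
  by (simp add: field_simps power2_eq_square)

lemma variance_maj:
  "measure_pmf.variance (unif_perm n) (maj_real n) = real n * (real n - 1) * (2 * real n + 5) / 72"
  unfolding variance_unif_perm mean_maj_sq mean_maj
  by (simp add: field_simps power2_eq_square)

text \<open>Both statistics have the same variance \<open>V\<close>, so the correlation is the covariance
  divided by \<open>V\<close>.\<close>

lemma correlation_inv_maj:
  assumes "2 \<le> n"
  shows "correlation (unif_perm n) (inv_real n) (maj_real n) = 9 / (2 * real n + 5)"
proof -
  define V where "V = real n * (real n - 1) * (2 * real n + 5) / 72"
  have "V > 0" using assms by (simp add: V_def)
  then have "sqrt (V * V) = V" by simp
  moreover have "real n * (real n - 1) / 8 / V = 9 / (2 * real n + 5)"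
  proof -
    have cancel: "k / 8 / (k * c / 72) = 9 / c" if "k \<noteq> 0" "c \<noteq> 0" for k c :: real
      using that by (simp add: field_simps)
    have "real n * (real n - 1) \<noteq> 0" "2 * real n + 5 \<noteq> 0" using assms by auto
    then show ?thesis unfolding V_def by (rule cancel)
  qed
  ultimately show ?thesis
    unfolding correlation_def covariance_inv_maj variance_inv variance_maj V_def[symmetric] by simp
qed

lemma correlation_inv_maj_tendsto_0:
  "(\<lambda>n. correlation (unif_perm n) (inv_real n) (maj_real n)) \<longlonglongrightarrow> 0"
proof -
  have "(\<lambda>n. 9 / (2 * real n + 5)) \<longlonglongrightarrow> 0"
    by real_asymp
  moreover have "eventually (\<lambda>n. 9 / (2 * real n + 5) = correlation (unif_perm n) (inv_real n) (maj_real n)) sequentially"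
    using eventually_ge_at_top[of 2] by eventually_elim (simp add: correlation_inv_maj)
  ultimately show ?thesis by (rule Lim_transform_eventually)
qed

theorem mainTheorem4:
  shows "(\<forall>n::nat. n \<ge> 1 \<longrightarrow>
            covariance (unif_perm n) (\<lambda>p. real (inv_stat n p)) (\<lambda>p. real (maj_stat n p))
              = real n * (real n - 1) / 8)
       \<and> (\<forall>n::nat. n \<ge> 2 \<longrightarrow>
            correlation (unif_perm n) (\<lambda>p. real (inv_stat n p)) (\<lambda>p. real (maj_stat n p))
              = 9 * (real n - 1) / (2 * real n ^ 2 + 3 * real n - 5)
          \<and> correlation (unif_perm n) (\<lambda>p. real (inv_stat n p)) (\<lambda>p. real (maj_stat n p))
              = 9 / (2 * real n + 5))
       \<and> (\<lambda>n. correlation (unif_perm n) (\<lambda>p. real (inv_stat n p)) (\<lambda>p. real (maj_stat n p)))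
            \<longlonglongrightarrow> 0"
proof (intro conjI allI impI)
  fix n :: nat
  show "covariance (unif_perm n) (inv_real n) (maj_real n) = real n * (real n - 1) / 8"
    by (rule covariance_inv_maj)
next
  fix n :: nat assume n: "n \<ge> 2"
  show "correlation (unif_perm n) (inv_real n) (maj_real n) = 9 / (2 * real n + 5)"
    by (rule correlation_inv_maj[OF n])
  have "2 * real n ^ 2 + 3 * real n - 5 = (real n - 1) * (2 * real n + 5)"
    by (simp add: algebra_simps power2_eq_square)
  moreover have "real n - 1 \<noteq> 0" using n by simp
  ultimately have "9 * (real n - 1) / (2 * real n ^ 2 + 3 * real n - 5) = 9 / (2 * real n + 5)"
    by (metis mult.commute nonzero_mult_divide_mult_cancel_left)
  then show "correlation (unif_perm n) (inv_real n) (maj_real n)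
      = 9 * (real n - 1) / (2 * real n ^ 2 + 3 * real n - 5)"
    using correlation_inv_maj[OF n] by simp
qed (rule correlation_inv_maj_tendsto_0)

end
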